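(* Let $(\mathfrak{g},[\cdot,\cdot]_{\mathfrak{g}},\phi_{\mathfrak{g}})$ be a finite-dimensional Hom-Lie algebra with a nondegenerate symmetric invariant bilinear form $\mathfrak B$. Then $\mathfrak g$ is weakly involutive, and $(\mathfrak g,\phi_{\mathfrak g},\mathrm{ad})$ and $(\mathfrak g^*,\phi_{\mathfrak g}^*,\mathrm{ad}^\circ)$ are equivalent representations of $\mathfrak g$. Conversely, if $\mathfrak g$ is weakly involutive and $(\mathfrak g,\phi_{\mathfrak g},\mathrm{ad})$ and $(\mathfrak g^*,\phi_{\mathfrak g}^*,\mathrm{ad}^\circ)$ are equivalent representations of $\mathfrak g$, then there exists a nondegenerate invariant bilinear form on $\mathfrak g$.
   Context: A Hom-Lie algebra $(\mathfrak{g},[\cdot,\cdot]_{\mathfrak{g}},\phi_{\mathfrak{g}})$: skew-symmetric bilinear bracket and linear map with $\phi_{\mathfrak g}[x,y]=[\phi_{\mathfrak g}x,\phi_{\mathfrak g}y]$ and $[\phi_{\mathfrak g}(x),[y,z]]+[\phi_{\mathfrak g}(y),[z,x]]+[\phi_{\mathfrak g}(z),[x,y]]=0$; weakly involutive if $[\phi_{\mathfrak g}^2(x),y]_{\mathfrak g}=[x,y]_{\mathfrak g}$ for all $x,y$. A representation $(V,\beta,\rho)$: $\beta\in\mathfrak{gl}(V)$, $\rho:\mathfrak g\to\mathfrak{gl}(V)$ with $\rho(\phi_{\mathfrak g}(x))\beta=\beta\rho(x)$ and $\rho([x,y])\beta=\rho(\phi_{\mathfrak g}(x))\rho(y)-\rho(\phi_{\mathfrak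 g}(y))\rho(x)$. Adjoint: $\mathrm{ad}_xy=[x,y]_{\mathfrak g}$. $\mathrm{ad}^\circ_xa\in\mathfrak g^*$: $\langle\mathrm{ad}^\circ_xa,y\rangle=-\langle a,[\phi_{\mathfrak g}(x),y]_{\mathfrak g}\rangle$. Two representations $(V,\beta,\rho)$, $(V',\beta',\rho')$ are equivalent if there is a linear isomorphism $\varphi:V\to V'$ with $\varphi\rho(x)=\rho'(x)\varphi$ for all $x$ and $\beta'\varphi=\varphi\beta$. A bilinear form $\mathfrak B$ on $\mathfrak g$ is invariant if $\mathfrak B([x,y]_{\mathfrak g},z)=\mathfrak B(x,[\phi_{\mathfrak g}(y),z]_{\mathfrak g})$ and $\mathfrak B(\phi_{\mathfrak g}(x),y)=\mathfrak B(x,\phi_{\mathfrak g}(y))$ for all $x,y,z$. *)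

theory Defs
  imports "HOL-Analysis.Analysis"
begin

text \<open>A finite-dimensional vector space over a field 'k is modelled as 'k^'n with 'n finite.
  The dual space is identified with 'k^'n via the standard pairing.\<close>

type_synonym ('k,'n) gvec = "'k ^ 'n"

definition lin :: "('k::field ^ 'm \<Rightarrow> 'k ^ 'n) \<Rightarrow> bool" where
  "lin f \<longleftrightarrow> (\<forall>x y. f (x + y) = f x + f y) \<and> (\<forall>c x. f (c *s x) = c *s f x)"

definition bilin_br :: "('k::field ^ 'n \<Rightarrow> 'k ^ 'n \<Rightarrow> 'k ^ 'n) \<Rightarrow> bool" where
  "bilin_br br \<longleftrightarrow> (\<forall>x. lin (br x)) \<and> (\<forall>y. lin (\<lambda>x. br x y))"

definition bilin_form :: "('k::field ^ 'n \<Rightarrow> 'k ^ 'n \<Rightarrow> 'k) \<Rightarrow> bool" where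
  "bilin_form B \<longleftrightarrow>
     (\<forall>x y z. B (x + y) z = B x z + B y z) \<and> (\<forall>c x z. B (c *s x) z = c * B x z) \<and>
     (\<forall>x y z. B x (y + z) = B x y + B x z) \<and> (\<forall>c x z. B x (c *s z) = c * B x z)"

definition hom_lie :: "('k::field ^ 'n \<Rightarrow> 'k ^ 'n \<Rightarrow> 'k ^ 'n) \<Rightarrow> ('k ^ 'n \<Rightarrow> 'k ^ 'n) \<Rightarrow> bool" where
  "hom_lie br phi \<longleftrightarrow> bilin_br br \<and> (\<forall>x y. br x y = - br y x) \<and> lin phi \<and>
     (\<forall>x y. phi (br x y) = br (phi x) (phi y)) \<and>
     (\<forall>x y z. br (phi x) (br y z) + br (phi y) (br z x) + br (phi z) (br x y) = 0)"

definition weakly_involutive :: "('k::field ^ 'n \<Rightarrow> 'k ^ 'n \<Rightarrow> 'k ^ 'n) \<Rightarrow> ('k ^ 'n \<Rightarrow> 'k ^ 'n) \<Rightarrow> bool" where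
  "weakly_involutive br phi \<longleftrightarrow> (\<forall>x y. br (phi (phi x)) y = br x y)"

definition is_rep :: "('k::field ^ 'n \<Rightarrow> 'k ^ 'n \<Rightarrow> 'k ^ 'n) \<Rightarrow> ('k ^ 'n \<Rightarrow> 'k ^ 'n)
    \<Rightarrow> ('k ^ 'm \<Rightarrow> 'k ^ 'm) \<Rightarrow> ('k ^ 'n \<Rightarrow> 'k ^ 'm \<Rightarrow> 'k ^ 'm) \<Rightarrow> bool" where
  "is_rep br phi beta rho \<longleftrightarrow> lin beta \<and> (\<forall>x. lin (rho x)) \<and>
     (\<forall>x y. rho (x + y) = (\<lambda>v. rho x v + rho y v)) \<and> (\<forall>c x. rho (c *s x) = (\<lambda>v. c *s rho x v)) \<and>
     (\<forall>x v. rho (phi x) (beta v) = beta (rho x v)) \<and>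
     (\<forall>x y v. rho (br x y) (beta v) = rho (phi x) (rho y v) - rho (phi y) (rho x v))"

definition equiv_rep :: "('k::field ^ 'm \<Rightarrow> 'k ^ 'm) \<Rightarrow> ('k ^ 'n \<Rightarrow> 'k ^ 'm \<Rightarrow> 'k ^ 'm)
    \<Rightarrow> ('k ^ 'm' \<Rightarrow> 'k ^ 'm') \<Rightarrow> ('k ^ 'n \<Rightarrow> 'k ^ 'm' \<Rightarrow> 'k ^ 'm') \<Rightarrow> bool" where
  "equiv_rep beta rho beta' rho' \<longleftrightarrow>
     (\<exists>f. lin f \<and> bij f \<and> (\<forall>x v. f (rho x v) = rho' x (f v)) \<and> (\<forall>v. beta' (f v) = f (beta v)))"

definition ad :: "('k::field ^ 'n \<Rightarrow> 'k ^ 'n \<Rightarrow> 'k ^ 'n) \<Rightarrow> 'k ^ 'n \<Rightarrow> 'k ^ 'n \<Rightarrow> 'k ^ 'n" where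
  "ad br x y = br x y"

definition pair :: "'k::field ^ 'n \<Rightarrow> 'k ^ 'n \<Rightarrow> 'k" where
  "pair a x = (\<Sum>i\<in>UNIV. a $ i * x $ i)"

text \<open>Dual map: pair (dual_map f a) x = pair a (f x).\<close>
definition dual_map :: "('k::field ^ 'n \<Rightarrow> 'k ^ 'n) \<Rightarrow> 'k ^ 'n \<Rightarrow> 'k ^ 'n" where
  "dual_map f a = (\<chi> i. pair a (f (axis i 1)))"

text \<open>pair (ad_circ br phi x a) y = - pair a (br (phi x) y).\<close>
definition ad_circ :: "('k::field ^ 'n \<Rightarrow> 'k ^ 'n \<Rightarrow> 'k ^ 'n) \<Rightarrow> ('k ^ 'n \<Rightarrow> 'k ^ 'n)
    \<Rightarrow> 'k ^ 'n \<Rightarrow> 'k ^ 'n \<Rightarrow> 'k ^ 'n" where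
  "ad_circ br phi x a = (\<chi> i. - pair a (br (phi x) (axis i 1)))"

definition nondegenerate :: "('k::field ^ 'n \<Rightarrow> 'k ^ 'n \<Rightarrow> 'k) \<Rightarrow> bool" where
  "nondegenerate B \<longleftrightarrow> (\<forall>x. (\<forall>y. B x y = 0) \<longrightarrow> x = 0) \<and> (\<forall>y. (\<forall>x. B x y = 0) \<longrightarrow> y = 0)"

definition invariant_form :: "('k::field ^ 'n \<Rightarrow> 'k ^ 'n \<Rightarrow> 'k ^ 'n) \<Rightarrow> ('k ^ 'n \<Rightarrow> 'k ^ 'n)
    \<Rightarrow> ('k ^ 'n \<Rightarrow> 'k ^ 'n \<Rightarrow> 'k) \<Rightarrow> bool" where
  "invariant_form br phi B \<longleftrightarrow> (\<forall>x y z. B (br x y) z = B x (br (phi y) z)) \<and>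
     (\<forall>x y. B (phi x) y = B x (phi y))"

end

theory Submission
  imports Defs
begin

text \<open>A bilinear form B corresponds to the linear map f v = B(v, -) from g to g*. Invariance of B
  says exactly that f intertwines ad with ad^o and phi with phi*, and nondegeneracy makes f bijective;
  conversely an intertwiner f yields the invariant form B(x, y) = <f x, y>.
  Weak involutivity comes from playing invariance against symmetry: both express B([x, y], z) as a
  pairing with x, which forces [phi y, z] = [phi y, phi^2 z]; hence phi^2 fixes every bracket
  [phi y, z], and B([phi^2 x, y], z) = B(x, phi^2 [phi y, z]) = B([x, y], z).\<close>

lemma lin_zero: "lin f \<Longrightarrow> f 0 = 0"
  unfolding lin_def by (metis add_cancel_right_right)

lemma lin_uminus: "lin f \<Longrightarrow> f (- x) = - f x"
  unfolding lin_def by (metis vector_sneg_minus1)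

lemma lin_imp_linear: "lin f \<Longrightarrow> Vector_Spaces.linear (*s) (*s) f"
  unfolding lin_def by unfold_locales auto

lemma pair_add_left: "pair (a + b) x = pair a x + pair b x"
  unfolding pair_def by (simp add: distrib_right sum.distrib)

lemma pair_add_right: "pair a (x + y) = pair a x + pair a y"
  unfolding pair_def by (simp add: distrib_left sum.distrib)

lemma pair_scale_left: "pair (c *s a) x = c * pair a x"
  unfolding pair_def by (simp add: sum_distrib_left mult.assoc)

lemma pair_scale_right: "pair a (c *s x) = c * pair a x"
  unfolding pair_def by (simp add: sum_distrib_left mult.left_commute)

lemma pair_uminus_left: "pair (- a) x = - pair a x"
  unfolding pair_def by (simp add: sum_negf)

lemma pair_diff_right: "pair a (x - y) = pair a x - pair a y"
  unfolding pair_def by (simp add: sum_subtractf right_diff_distrib)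

lemma pair_zero_left: "pair 0 x = 0"
  unfolding pair_def by simp

lemma pair_axis_right: "pair a (axis i 1) = a $ i"
  unfolding pair_def axis_def by (simp add: if_distrib cong: if_cong)

lemma pair_commute: "pair a x = pair x a"
  unfolding pair_def by (simp add: mult.commute)

lemma pair_axis_left: "pair (axis i 1) a = a $ i"
  by (simp add: pair_commute pair_axis_right)

lemma vec_eq_pair_axisI: "(\<And>i. pair u (axis i 1) = pair w (axis i 1)) \<Longrightarrow> u = w"
  by (simp add: pair_axis_right vec_eq_iff)

lemma pair_basis_values:
  assumes add: "\<And>x y. h (x + y) = h x + h y" and scale: "\<And>c x. h (c *s x) = (c::'k::field) * h x"
  shows "pair (\<chi> i. h (axis i 1)) (y::'k ^ 'n) = h y"
proof -
  interpret Vector_Spaces.linear "(*s)" "(*)" h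
    by unfold_locales (auto simp: add scale)
  have "h y = h (\<Sum>i\<in>UNIV. (y $ i) *s axis i 1)"
    by (simp add: basis_expansion)
  also have "\<dots> = (\<Sum>i\<in>UNIV. y $ i * h (axis i 1))"
    by (simp add: sum scale)
  finally show ?thesis
    unfolding pair_def by (simp add: mult.commute)
qed

lemma pair_dual_map: "lin f \<Longrightarrow> pair (dual_map f a) x = pair a (f x)"
  unfolding dual_map_def
  by (rule pair_basis_values) (auto simp: lin_def pair_add_right pair_scale_right)

lemma pair_ad_circ: "lin (br (phi x)) \<Longrightarrow> pair (ad_circ br phi x a) z = - pair a (br (phi x) z)"
  unfolding ad_circ_def
  by (rule pair_basis_values) (auto simp: lin_def pair_add_right pair_scale_right)

lemma lin_dual_map: "lin (dual_map f)"
  unfolding lin_def dual_map_def by (simp add: vec_eq_iff pair_add_left pair_scale_left)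

lemma lin_ad_circ: "lin (ad_circ br phi x)"
  unfolding lin_def ad_circ_def by (simp add: vec_eq_iff pair_add_left pair_scale_left)

lemma bilin_form_uminus_left:
  assumes "bilin_form B" shows "B (- x) z = - B x z"
proof -
  have "B ((-1) *s x) z = (-1) * B x z"
    using assms unfolding bilin_form_def by (simp only:)
  then show ?thesis
    by (simp only: vector_sneg_minus1 mult_minus1)
qed

lemma bilin_form_uminus_right:
  assumes "bilin_form B" shows "B z (- x) = - B z x"
proof -
  have "B z ((-1) *s x) = (-1) * B z x"
    using assms unfolding bilin_form_def by (simp only:)
  then show ?thesis
    by (simp only: vector_sneg_minus1 mult_minus1)
qed

lemma bilin_form_diff_left:
  assumes "bilin_form B" shows "B (x - y) z = B x z - B y z"
  using assms bilin_form_uminus_left[OF assms] unfolding bilin_form_def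
  by (simp only: diff_conv_add_uminus)

lemma bilin_form_diff_right:
  assumes "bilin_form B" shows "B z (x - y) = B z x - B z y"
  using assms bilin_form_uminus_right[OF assms] unfolding bilin_form_def
  by (simp only: diff_conv_add_uminus)

lemma nondegenerate_cancel_left:
  assumes "bilin_form B" "nondegenerate B" "\<And>z. B a z = B b z"
  shows "a = b"
proof -
  have "\<forall>z. B (a - b) z = 0"
    using assms(3) by (simp add: bilin_form_diff_left[OF assms(1)])
  then show ?thesis
    using assms(2) unfolding nondegenerate_def by auto
qed

lemma nondegenerate_cancel_right:
  assumes "bilin_form B" "nondegenerate B" "\<And>z. B z a = B z b"
  shows "a = b"
proof -
  have "\<forall>z. B z (a - b) = 0"
    using assms(3) by (simp add: bilin_form_diff_right[OF assms(1)])
  then show ?thesis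
    using assms(2) unfolding nondegenerate_def by auto
qed

lemma bilin_form_pair: "lin f \<Longrightarrow> bilin_form (\<lambda>x y. pair (f x) y)"
  unfolding bilin_form_def lin_def
  by (simp add: pair_add_left pair_add_right pair_scale_left pair_scale_right)

lemma nondegenerate_pair:
  assumes f: "lin f" "bij f"
  shows "nondegenerate (\<lambda>x y. pair (f x) y)"
  unfolding nondegenerate_def
proof (intro conjI allI impI)
  fix x assume "\<forall>y. pair (f x) y = 0"
  then have "f x = f 0"
    by (intro vec_eq_pair_axisI) (simp add: lin_zero[OF f(1)] pair_zero_left)
  then show "x = 0"
    using f(2) by (simp add: bij_def inj_eq)
next
  fix y assume vanish: "\<forall>x. pair (f x) y = 0"
  have "y $ i = 0" for i
  proof -
    obtain x where "f x = axis i 1"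
      using f(2) by (metis bij_def surj_def)
    then show ?thesis
      using vanish[rule_format, of x] by (simp add: pair_axis_left)
  qed
  then show "y = 0"
    by (simp add: vec_eq_iff)
qed

lemma nondegenerate_form_dual_iso:
  assumes B: "bilin_form B" "nondegenerate B"
  obtains f where "lin f" "bij f" "\<And>v y. pair (f v) y = B v y"
proof
  let ?f = "\<lambda>v. \<chi> i. B v (axis i 1)"
  show pair_f: "pair (?f v) y = B v y" for v y
    by (rule pair_basis_values) (use B(1) in \<open>auto simp: bilin_form_def\<close>)
  show lin_f: "lin ?f"
    using B(1) unfolding lin_def bilin_form_def by (simp add: vec_eq_iff)
  have "inj ?f"
  proof (rule injI)
    fix u v assume "?f u = ?f v"
    then have "B u z = B v z" for z
      using pair_f[of u z] pair_f[of v z] by simp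
    then show "u = v"
      by (rule nondegenerate_cancel_left[OF B])
  qed
  moreover have "surj ?f"
    using vec.linear_inj_imp_surj[OF lin_imp_linear[OF lin_f]] calculation .
  ultimately show "bij ?f"
    by (simp add: bij_def)
qed

context
  fixes br :: "'k::field ^ 'n \<Rightarrow> 'k ^ 'n \<Rightarrow> 'k ^ 'n" and phi :: "'k ^ 'n \<Rightarrow> 'k ^ 'n"
  assumes hom_lie: "hom_lie br phi"
begin

lemma lin_bracket_right: "lin (br x)"
  using hom_lie unfolding hom_lie_def bilin_br_def by blast

lemma lin_bracket_left: "lin (\<lambda>x. br x y)"
  using hom_lie unfolding hom_lie_def bilin_br_def by blast

lemma bracket_add_left: "br (x + y) z = br x z + br y z"
  using lin_bracket_left[of z] unfolding lin_def by simp

lemma bracket_scale_left: "br (c *s x) z = c *s br x z"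
  using lin_bracket_left[of z] unfolding lin_def by simp

lemma bracket_skew: "br x y = - br y x"
  using hom_lie unfolding hom_lie_def by blast

lemma lin_phi: "lin phi"
  using hom_lie unfolding hom_lie_def by blast

lemma phi_bracket: "phi (br x y) = br (phi x) (phi y)"
  using hom_lie unfolding hom_lie_def by blast

lemma hom_jacobi: "br (phi x) (br y z) + br (phi y) (br z x) + br (phi z) (br x y) = 0"
  using hom_lie unfolding hom_lie_def by blast

lemma bracket_bracket_phi: "br (br x y) (phi v) = br (phi x) (br y v) - br (phi y) (br x v)"
proof -
  have "br (br x y) (phi v) = - br (phi v) (br x y)"
    by (rule bracket_skew)
  also have "\<dots> = br (phi x) (br y v) + br (phi y) (br v x)"
  proof -
    have "br (phi x) (br y v) + br (phi y) (br v x) = - br (phi v) (br x y)"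
      by (simp only: eq_neg_iff_add_eq_0 hom_jacobi)
    then show ?thesis
      by simp
  qed
  also have "br v x = - br x v"
    by (rule bracket_skew)
  finally show ?thesis
    by (simp add: lin_uminus[OF lin_bracket_right])
qed

lemma is_rep_ad: "is_rep br phi phi (ad br)"
  unfolding is_rep_def ad_def
  by (auto simp: fun_eq_iff lin_phi lin_bracket_right bracket_bracket_phi
      bracket_add_left bracket_scale_left phi_bracket)

lemma ad_circ_add: "ad_circ br phi (x + y) v = ad_circ br phi x v + ad_circ br phi y v"
  unfolding ad_circ_def vec_eq_iff
  by (simp add: lin_phi[unfolded lin_def] bracket_add_left pair_add_right)

lemma ad_circ_scale: "ad_circ br phi (c *s x) v = c *s ad_circ br phi x v"
  unfolding ad_circ_def vec_eq_iff
  by (simp add: lin_phi[unfolded lin_def] bracket_scale_left pair_scale_right)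

context
  assumes weak_inv: "weakly_involutive br phi"
begin

lemma bracket_phi_phi_left: "br (phi (phi x)) y = br x y"
  using weak_inv unfolding weakly_involutive_def by blast

lemma bracket_phi_phi_right: "br x (phi (phi y)) = br x y"
  using bracket_skew[of x "phi (phi y)"] bracket_skew[of y x] by (simp add: bracket_phi_phi_left)

lemma ad_circ_phi_dual_map:
  "ad_circ br phi (phi x) (dual_map phi v) = dual_map phi (ad_circ br phi x v)"
  by (rule vec_eq_pair_axisI) (simp add: pair_ad_circ lin_bracket_right pair_dual_map lin_phi
      phi_bracket bracket_phi_phi_left bracket_phi_phi_right)

lemma ad_circ_bracket_dual_map:
  "ad_circ br phi (br x y) (dual_map phi v) =
     ad_circ br phi (phi x) (ad_circ br phi y v) - ad_circ br phi (phi y) (ad_circ br phi x v)"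
proof (rule vec_eq_pair_axisI)
  fix i
  let ?e = "axis i 1 :: 'k ^ 'n"
  have "pair (ad_circ br phi (br x y) (dual_map phi v)) ?e = - pair v (br (br x y) (phi ?e))"
    by (simp add: pair_ad_circ lin_bracket_right pair_dual_map lin_phi phi_bracket
        bracket_phi_phi_left bracket_phi_phi_right)
  also have "\<dots> = pair v (br (phi y) (br x ?e)) - pair v (br (phi x) (br y ?e))"
    by (simp add: bracket_bracket_phi pair_diff_right)
  also have "\<dots> = pair (ad_circ br phi (phi x) (ad_circ br phi y v)) ?e
                  - pair (ad_circ br phi (phi y) (ad_circ br phi x v)) ?e"
    by (simp add: pair_ad_circ lin_bracket_right bracket_phi_phi_left)
  finally show "pair (ad_circ br phi (br x y) (dual_map phi v)) ?e =
      pair (ad_circ br phi (phi x) (ad_circ br phi y v) - ad_circ br phi (phi y) (ad_circ br phi x v)) ?e"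
    by (simp add: pair_axis_right)
qed

lemma is_rep_ad_circ: "is_rep br phi (dual_map phi) (ad_circ br phi)"
  unfolding is_rep_def
  by (simp add: fun_eq_iff lin_dual_map lin_ad_circ ad_circ_add ad_circ_scale
      ad_circ_phi_dual_map ad_circ_bracket_dual_map)

end

context
  fixes B :: "'k ^ 'n \<Rightarrow> 'k ^ 'n \<Rightarrow> 'k"
  assumes bilin: "bilin_form B" and nondeg: "nondegenerate B" and invariant: "invariant_form br phi B"
begin

lemma form_bracket_left: "B (br x y) z = B x (br (phi y) z)"
  using invariant unfolding invariant_form_def by blast

lemma form_phi: "B (phi x) y = B x (phi y)"
  using invariant unfolding invariant_form_def by blast

lemma equiv_rep_of_invariant_form: "equiv_rep phi (ad br) (dual_map phi) (ad_circ br phi)"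
proof -
  obtain f where f: "lin f" "bij f" and pair_f: "\<And>v y. pair (f v) y = B v y"
    using nondegenerate_form_dual_iso[OF bilin nondeg] by blast
  have "f (ad br x v) = ad_circ br phi x (f v)" for x v
  proof (rule vec_eq_pair_axisI)
    fix i
    have "B (br x v) (axis i 1) = - B (br v x) (axis i 1)"
      by (subst bracket_skew) (rule bilin_form_uminus_left[OF bilin])
    then show "pair (f (ad br x v)) (axis i 1) = pair (ad_circ br phi x (f v)) (axis i 1)"
      by (simp add: ad_def pair_f pair_ad_circ lin_bracket_right form_bracket_left)
  qed
  moreover have "dual_map phi (f v) = f (phi v)" for v
    by (rule vec_eq_pair_axisI) (simp add: pair_f pair_dual_map lin_phi form_phi)
  ultimately show ?thesis
    unfolding equiv_rep_def using f by blast
qed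

context
  assumes symm: "\<And>x y. B x y = B y x"
begin

lemma bracket_phi_phi_on_phi_image: "br (phi (phi x)) (phi y) = br x (phi y)"
proof (rule nondegenerate_cancel_right[OF bilin nondeg, symmetric])
  fix w
  have "B w (br x (phi y)) = - B w (br (phi y) x)"
    by (subst bracket_skew) (rule bilin_form_uminus_right[OF bilin])
  also have "\<dots> = - B (br w y) x"
    by (simp only: form_bracket_left)
  also have "\<dots> = B (br y w) x"
    by (subst bracket_skew) (simp only: bilin_form_uminus_left[OF bilin] minus_minus)
  also have "\<dots> = B y (br (phi w) x)"
    by (rule form_bracket_left)
  also have "\<dots> = B (br (phi w) x) y"
    by (rule symm)
  also have "\<dots> = B (phi w) (br (phi x) y)"
    by (rule form_bracket_left)
  also have "\<dots> = B w (phi (br (phi x) y))"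
    by (rule form_phi)
  finally show "B w (br x (phi y)) = B w (br (phi (phi x)) (phi y))"
    by (simp only: phi_bracket)
qed

lemma phi_phi_bracket_phi: "phi (phi (br (phi y) z)) = br (phi y) z"
proof -
  have "phi (phi (br (phi y) z)) = br (phi (phi (phi y))) (phi (phi z))"
    by (simp only: phi_bracket)
  also have "\<dots> = br (phi y) (phi (phi z))"
    by (rule bracket_phi_phi_on_phi_image)
  also have "\<dots> = - br (phi (phi z)) (phi y)"
    by (rule bracket_skew)
  also have "\<dots> = - br z (phi y)"
    by (simp only: bracket_phi_phi_on_phi_image)
  also have "\<dots> = br (phi y) z"
    by (simp only: bracket_skew[of "phi y" z])
  finally show ?thesis .
qed

lemma weakly_involutive_of_invariant_form: "weakly_involutive br phi"
  unfolding weakly_involutive_def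
proof (intro allI nondegenerate_cancel_left[OF bilin nondeg])
  fix x y z
  have "B (br (phi (phi x)) y) z = B x (phi (phi (br (phi y) z)))"
    by (simp only: form_bracket_left form_phi)
  also have "\<dots> = B (br x y) z"
    by (simp only: phi_phi_bracket_phi form_bracket_left)
  finally show "B (br (phi (phi x)) y) z = B (br x y) z" .
qed

end

end

lemma invariant_form_of_equiv_rep:
  assumes "equiv_rep phi (ad br) (dual_map phi) (ad_circ br phi)"
  shows "\<exists>B. bilin_form B \<and> nondegenerate B \<and> invariant_form br phi B"
proof -
  obtain f where f: "lin f" "bij f"
    and f_ad: "\<And>x v. f (ad br x v) = ad_circ br phi x (f v)"
    and f_phi: "\<And>v. dual_map phi (f v) = f (phi v)"
    using assms unfolding equiv_rep_def by blast
  have "invariant_form br phi (\<lambda>x y. pair (f x) y)"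
    unfolding invariant_form_def
  proof (intro conjI allI)
    fix x y z
    have "f (br x y) = - ad_circ br phi y (f x)"
      using f_ad[of y x] bracket_skew[of x y] lin_uminus[OF f(1)] by (simp add: ad_def)
    then show "pair (f (br x y)) z = pair (f x) (br (phi y) z)"
      by (simp add: pair_uminus_left pair_ad_circ lin_bracket_right)
  next
    fix x y
    show "pair (f (phi x)) y = pair (f x) (phi y)"
      by (simp flip: f_phi add: pair_dual_map lin_phi)
  qed
  then show ?thesis
    using bilin_form_pair[OF f(1)] nondegenerate_pair[OF f] by blast
qed

end

theorem proposition2p15:
  fixes br :: "'k::field ^ 'n \<Rightarrow> 'k ^ 'n \<Rightarrow> 'k ^ 'n" and phi :: "'k ^ 'n \<Rightarrow> 'k ^ 'n"
  assumes "hom_lie br phi"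
  shows "(\<forall>B. bilin_form B \<and> nondegenerate B \<and> (\<forall>x y. B x y = B y x) \<and> invariant_form br phi B
            \<longrightarrow> weakly_involutive br phi \<and> is_rep br phi phi (ad br)
                \<and> is_rep br phi (dual_map phi) (ad_circ br phi)
                \<and> equiv_rep phi (ad br) (dual_map phi) (ad_circ br phi))
       \<and> (weakly_involutive br phi \<and> is_rep br phi phi (ad br)
                \<and> is_rep br phi (dual_map phi) (ad_circ br phi)
                \<and> equiv_rep phi (ad br) (dual_map phi) (ad_circ br phi)
            \<longrightarrow> (\<exists>B. bilin_form B \<and> nondegenerate B \<and> invariant_form br phi B))"
proof (rule conjI; intro allI impI)
  fix B
  assume "bilin_form B \<and> nondegenerate B \<and> (\<forall>x y. B x y = B y x) \<and> invariant_form br phi B"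
  then have B: "bilin_form B" "nondegenerate B" "\<And>x y. B x y = B y x" "invariant_form br phi B"
    by auto
  have "weakly_involutive br phi"
    by (rule weakly_involutive_of_invariant_form[OF assms B(1,2,4,3)])
  then show "weakly_involutive br phi \<and> is_rep br phi phi (ad br)
      \<and> is_rep br phi (dual_map phi) (ad_circ br phi)
      \<and> equiv_rep phi (ad br) (dual_map phi) (ad_circ br phi)"
    using is_rep_ad[OF assms] is_rep_ad_circ[OF assms] equiv_rep_of_invariant_form[OF assms B(1,2,4)]
    by blast
next
  assume "weakly_involutive br phi \<and> is_rep br phi phi (ad br)
      \<and> is_rep br phi (dual_map phi) (ad_circ br phi)
      \<and> equiv_rep phi (ad br) (dual_map phi) (ad_circ br phi)"
  \<comment> \<open>only the equivalence of the two representations is needed here\<close>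
  then show "\<exists>B. bilin_form B \<and> nondegenerate B \<and> invariant_form br phi B"
    using invariant_form_of_equiv_rep[OF assms] by blast
qed

end
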